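(* Let $m\ge1$, $\delta\in(0,\tfrac12)$, $\epsilon\in(0,1)$, and let $r(m,\epsilon):=\max\{r\in\{0,\dots,m\}: f^{avg}_{m,r}<1-\epsilon\}$ (with $r(m,\epsilon):=-1$ if this set is empty, and $\binom{m}{\le -1}:=0$). Then \[\frac{\binom{m}{\le r(m,\epsilon)}}{2^m}\ge 1-\frac{h(\delta)}{1-\epsilon}.\]
   Context: $h(\delta)=-\delta\log_2\delta-(1-\delta)\log_2(1-\delta)$ and $\binom{m}{\le r}=\sum_{i=0}^r\binom{m}{i}$. Every function $\mathbb{F}_2^m\to\mathbb{F}_2$ is uniquely a multilinear polynomial $\sum_{S\subseteq[m]}c_Sx_S$, $x_S=\prod_{i\in S}x_i$. Let $Z=(Z_x)_{x\in\mathbb{F}_2^m}$ have i.i.d. Bernoulli$(\delta)$ entries and let $W=(W_S)_{S\subseteq[m]}$ be the coefficient vector of the multilinear polynomial whose evaluation table is $Z$. Write $W_r=(W_S)_{|S|=r}$, $W_{>r}=(W_S)_{|S|>r}$. Define $f_{m,r}:=H(W_r\mid W_{>r})$ (base-2 Shannon conditional entropy) and $f^{avg}_{m,r}:=f_{m,r}/\binom{m}{r}$. *)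

theory Defs
  imports Complex_Main
begin

(* Points of F_2^m are encoded by their supports: subsets of {..<m}.
   A function F_2^m -> F_2 (evaluation table) is a map  nat set => bool
   that is False outside the cube. F_2 is encoded as bool (True = 1). *)
definition cube :: "nat \<Rightarrow> nat set set" where
  "cube m = Pow {..<m}"

definition tables :: "nat \<Rightarrow> (nat set \<Rightarrow> bool) set" where
  "tables m = {z. \<forall>x. z x \<longrightarrow> x \<in> cube m}"

(* evaluation of the multilinear polynomial sum_S c_S x_S at the point with support x:
   x_S = 1 iff S \<subseteq> x; sum taken in F_2 *)
definition eval_poly :: "(nat set \<Rightarrow> bool) \<Rightarrow> nat set \<Rightarrow> bool" where
  "eval_poly c x = odd (card {S. S \<subseteq> x \<and> c S})"

definition coeffs :: "nat \<Rightarrow> (nat set \<Rightarrow> bool) \<Rightarrow> nat set \<Rightarrow> bool" where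
  "coeffs m z = (THE c. (\<forall>S. c S \<longrightarrow> S \<in> cube m) \<and> (\<forall>x\<in>cube m. eval_poly c x = z x))"

definition prob_tab :: "nat \<Rightarrow> real \<Rightarrow> (nat set \<Rightarrow> bool) \<Rightarrow> real" where
  "prob_tab m \<delta> z = \<delta> ^ card {x\<in>cube m. z x} * (1 - \<delta>) ^ card {x\<in>cube m. \<not> z x}"

definition prob_event :: "nat \<Rightarrow> real \<Rightarrow> ((nat set \<Rightarrow> bool) \<Rightarrow> bool) \<Rightarrow> real" where
  "prob_event m \<delta> E = (\<Sum>z\<in>{z\<in>tables m. E z}. prob_tab m \<delta> z)"

definition cond_entropy :: "nat \<Rightarrow> real \<Rightarrow> ((nat set \<Rightarrow> bool) \<Rightarrow> 'a) \<Rightarrow> ((nat set \<Rightarrow> bool) \<Rightarrow> 'b) \<Rightarrow> real" where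
  "cond_entropy m \<delta> A B =
     (\<Sum>ab\<in>(\<lambda>z. (A z, B z)) ` tables m.
        let pab = prob_event m \<delta> (\<lambda>z. A z = fst ab \<and> B z = snd ab);
            pb = prob_event m \<delta> (\<lambda>z. B z = snd ab)
        in pab * log 2 (pb / pab))"

definition W_eq :: "nat \<Rightarrow> nat \<Rightarrow> (nat set \<Rightarrow> bool) \<Rightarrow> nat set \<Rightarrow> bool" where
  "W_eq m r z = (\<lambda>S. if S \<in> cube m \<and> card S = r then coeffs m z S else False)"

definition W_gt :: "nat \<Rightarrow> nat \<Rightarrow> (nat set \<Rightarrow> bool) \<Rightarrow> nat set \<Rightarrow> bool" where
  "W_gt m r z = (\<lambda>S. if S \<in> cube m \<and> card S > r then coeffs m z S else False)"

definition f_ent :: "nat \<Rightarrow> real \<Rightarrow> nat \<Rightarrow> real" where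
  "f_ent m \<delta> r = cond_entropy m \<delta> (W_eq m r) (W_gt m r)"

definition f_avg :: "nat \<Rightarrow> real \<Rightarrow> nat \<Rightarrow> real" where
  "f_avg m \<delta> r = f_ent m \<delta> r / real (m choose r)"

definition r_thr :: "nat \<Rightarrow> real \<Rightarrow> real \<Rightarrow> int" where
  "r_thr m \<delta> \<epsilon> =
     (if {r. r \<le> m \<and> f_avg m \<delta> r < 1 - \<epsilon>} = {} then -1
      else int (Max {r. r \<le> m \<and> f_avg m \<delta> r < 1 - \<epsilon>}))"

definition binom_le :: "nat \<Rightarrow> int \<Rightarrow> nat" where
  "binom_le m k = (\<Sum>i\<in>{0..k}. m choose nat i)"

definition bin_entropy :: "real \<Rightarrow> real" where
  "bin_entropy \<delta> = - \<delta> * log 2 \<delta> - (1 - \<delta>) * log 2 (1 - \<delta>)"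

end

theory Submission
  imports Defs
begin

(* The chain rule telescopes: f(m,r) = H(W_r, W_>r) - H(W_>r) and (W_(r+1), W_>(r+1)) carries the
   same information as W_>r, so the sum of f(m,r) over r <= m is H(W) - H(W_>m) = H(W). Since the
   coefficient vector W determines the table Z (Moebius inversion over F_2), H(W) = H(Z) = 2^m h(delta).
   Every r above r(m,eps) contributes at least (1 - eps) binom(m,r) to that sum and no term is negative,
   so (1 - eps) (2^m - binom(m, <= r(m,eps))) <= 2^m h(delta). *)

lemma finite_cube: "finite (cube m)"
  by (simp add: cube_def)

lemma tables_eq_image_Pow: "tables m = (\<lambda>A x. x \<in> A) ` Pow (cube m)"
proof
  show "tables m \<subseteq> (\<lambda>A x. x \<in> A) ` Pow (cube m)"
  proof
    fix z assume "z \<in> tables m"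
    then have "{x. z x} \<in> Pow (cube m)" "z = (\<lambda>x. x \<in> {x. z x})" by (auto simp: tables_def)
    then show "z \<in> (\<lambda>A x. x \<in> A) ` Pow (cube m)" by blast
  qed
qed (auto simp: tables_def)

lemma finite_tables: "finite (tables m)"
  by (simp add: tables_eq_image_Pow finite_cube)

lemma sum_tables_Pow: "(\<Sum>z\<in>tables m. g z) = (\<Sum>A\<in>Pow (cube m). g (\<lambda>x. x \<in> A))"
proof -
  have "inj_on (\<lambda>A x. x \<in> A) (Pow (cube m))"
    by (auto simp: inj_on_def fun_eq_iff)
  then show ?thesis
    by (simp add: tables_eq_image_Pow sum.reindex)
qed

lemma prob_tab_indicator:
  "A \<subseteq> cube m \<Longrightarrow> prob_tab m d (\<lambda>x. x \<in> A) = d ^ card A * (1 - d) ^ card (cube m - A)"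
  unfolding prob_tab_def by (simp add: Int_absorb1 set_diff_eq flip: Collect_conj_eq Int_def)

lemma sum_Pow_insert:
  assumes "finite F" "x \<notin> F"
  shows "(\<Sum>A\<in>Pow (insert x F). g A) = (\<Sum>A\<in>Pow F. g A) + (\<Sum>A\<in>Pow F. g (insert x A))"
proof -
  have "inj_on (insert x) (Pow F)"
    using assms(2) by (auto simp: inj_on_def)
  moreover have "Pow F \<inter> insert x ` Pow F = {}"
    using assms(2) by auto
  ultimately show ?thesis
    using assms(1) by (simp add: Pow_insert sum.union_disjoint sum.reindex)
qed

lemma sum_Pow_bernoulli:
  fixes d :: real
  assumes "finite X"
  shows "(\<Sum>A\<in>Pow X. d ^ card A * (1 - d) ^ card (X - A)) = 1"
  using prod_add[OF assms, of "\<lambda>_. d" "\<lambda>_. 1 - d"] by simp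

lemma sum_Pow_card_bernoulli:
  fixes d :: real
  assumes "finite X"
  shows "(\<Sum>A\<in>Pow X. real (card A) * (d ^ card A * (1 - d) ^ card (X - A))) = real (card X) * d"
  using assms
proof (induction X rule: finite_induct)
  case (insert x F)
  let ?q = "\<lambda>A. d ^ card A * (1 - d) ^ card (F - A)"
  have [simp]: "card (insert x A) = Suc (card A)" "F - insert x A = F - A"
    "card (insert x F - A) = Suc (card (F - A))" if "A \<in> Pow F" for A
    using that insert.hyps finite_subset[of A F]
    by (auto simp: insert_Diff_if) (metis card_insert_disjoint subsetD)
  have "(\<Sum>A\<in>Pow (insert x F). real (card A) * (d ^ card A * (1 - d) ^ card (insert x F - A)))
      = (1 - d) * (\<Sum>A\<in>Pow F. real (card A) * ?q A) + d * (\<Sum>A\<in>Pow F. (real (card A) + 1) * ?q A)"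
    by (simp add: sum_Pow_insert[OF insert.hyps] sum_distrib_left algebra_simps)
  also have "\<dots> = real (card (insert x F)) * d"
    using insert sum_Pow_bernoulli[OF insert.hyps(1), of d]
    by (simp add: algebra_simps sum.distrib)
  finally show ?case .
qed simp

lemma eval_poly_differs_at_minimal:
  assumes "finite S" "c S" "\<not> c' S" "\<And>T. T \<subset> S \<Longrightarrow> c T = c' T"
  shows "eval_poly c S \<noteq> eval_poly c' S"
proof -
  have fin: "finite {T. T \<subset> S \<and> c T}"
    using assms(1) by (auto intro: finite_subset[of _ "Pow S"])
  have "{T. T \<subseteq> S \<and> c T} = insert S {T. T \<subset> S \<and> c T}"
    "{T. T \<subseteq> S \<and> c' T} = {T. T \<subset> S \<and> c T}"
    using assms by auto
  then show ?thesis
    using fin by (simp add: eval_poly_def)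
qed

lemma eval_poly_inj_on_tables:
  assumes c: "c \<in> tables m" and c': "c' \<in> tables m"
    and eval_eq: "\<forall>x\<in>cube m. eval_poly c x = eval_poly c' x"
  shows "c = c'"
proof (rule ccontr)
  assume "c \<noteq> c'"
  then obtain S0 where "c S0 \<noteq> c' S0" by auto
  then obtain S where S: "c S \<noteq> c' S" and S_min: "\<And>T. c T \<noteq> c' T \<Longrightarrow> card S \<le> card T"
    using ex_has_least_nat[of "\<lambda>S. c S \<noteq> c' S" S0 card] by blast
  have "S \<in> cube m" using S c c' by (auto simp: tables_def)
  then have "finite S" by (auto simp: cube_def intro: finite_subset)
  have below: "c T = c' T" if "T \<subset> S" for T
    using S_min[of T] psubset_card_mono[OF \<open>finite S\<close> that] by linarith
  have "eval_poly c S \<noteq> eval_poly c' S"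
    using S below eval_poly_differs_at_minimal[OF \<open>finite S\<close>, of c c']
      eval_poly_differs_at_minimal[OF \<open>finite S\<close>, of c' c]
    by (cases "c S") auto
  then show False using eval_eq \<open>S \<in> cube m\<close> by blast
qed

definition eval_table :: "nat \<Rightarrow> (nat set \<Rightarrow> bool) \<Rightarrow> nat set \<Rightarrow> bool" where
  "eval_table m c = (\<lambda>x. x \<in> cube m \<and> eval_poly c x)"

lemma eval_table_surj: "eval_table m ` tables m = tables m"
proof (rule endo_inj_surj)
  show "finite (tables m)" by (rule finite_tables)
  show "eval_table m ` tables m \<subseteq> tables m" by (auto simp: eval_table_def tables_def)
  show "inj_on (eval_table m) (tables m)"
    by (rule inj_onI, rule eval_poly_inj_on_tables) (auto simp: eval_table_def fun_eq_iff)
qed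

lemma coeffs_in_tables_and_eval:
  assumes "z \<in> tables m"
  shows "coeffs m z \<in> tables m" "\<forall>x\<in>cube m. eval_poly (coeffs m z) x = z x"
proof -
  let ?P = "\<lambda>c. (\<forall>S. c S \<longrightarrow> S \<in> cube m) \<and> (\<forall>x\<in>cube m. eval_poly c x = z x)"
  obtain c where c: "c \<in> tables m" "z = eval_table m c"
    using assms eval_table_surj by (metis imageE)
  have "\<exists>!c. ?P c"
  proof (rule ex1I)
    show "?P c" using c by (auto simp: tables_def eval_table_def)
  next
    fix c' assume "?P c'"
    then show "c' = c"
      using c by (intro eval_poly_inj_on_tables[of c' m c]) (auto simp: tables_def eval_table_def)
  qed
  then have "?P (coeffs m z)"
    unfolding coeffs_def by (rule theI')
  then show "coeffs m z \<in> tables m" "\<forall>x\<in>cube m. eval_poly (coeffs m z) x = z x"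
    by (auto simp: tables_def)
qed

lemma coeffs_inj_on_tables: "inj_on (coeffs m) (tables m)"
proof (rule inj_onI, rule ext)
  fix z z' x assume z: "z \<in> tables m" and z': "z' \<in> tables m" and eq: "coeffs m z = coeffs m z'"
  show "z x = z' x"
  proof (cases "x \<in> cube m")
    case True
    then show ?thesis
      using coeffs_in_tables_and_eval(2)[OF z] coeffs_in_tables_and_eval(2)[OF z'] eq by metis
  next
    case False
    then show ?thesis using z z' by (auto simp: tables_def)
  qed
qed

lemma coeffs_eq_W_eq_0_or_W_gt_0:
  "z \<in> tables m \<Longrightarrow> coeffs m z = (\<lambda>S. W_eq m 0 z S \<or> W_gt m 0 z S)"
  using coeffs_in_tables_and_eval(1)[of z m] by (auto simp: W_eq_def W_gt_def tables_def fun_eq_iff)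

lemma W_gt_eq_W_eq_Suc_or_W_gt_Suc:
  "W_gt m r z = (\<lambda>S. W_eq m (Suc r) z S \<or> W_gt m (Suc r) z S)"
  by (auto simp: W_eq_def W_gt_def fun_eq_iff)

lemma W_eq_Suc_eq: "W_eq m (Suc r) z = (\<lambda>S. card S = Suc r \<and> W_gt m r z S)"
  by (auto simp: W_eq_def W_gt_def fun_eq_iff)

lemma W_gt_Suc_eq: "W_gt m (Suc r) z = (\<lambda>S. Suc r < card S \<and> W_gt m r z S)"
  by (auto simp: W_gt_def fun_eq_iff)

lemma W_gt_top: "W_gt m m = (\<lambda>z S. False)"
proof -
  have "card S \<le> m" if "S \<in> cube m" for S
    using that card_mono[of "{..<m}" S] by (auto simp: cube_def)
  then show ?thesis unfolding W_gt_def fun_eq_iff by (meson not_le)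
qed

definition entropy :: "nat \<Rightarrow> real \<Rightarrow> ((nat set \<Rightarrow> bool) \<Rightarrow> 'a) \<Rightarrow> real" where
  "entropy m d X = (\<Sum>z\<in>tables m. prob_tab m d z * - log 2 (prob_event m d (\<lambda>z'. X z' = X z)))"

context
  fixes m :: nat and d :: real
  assumes d_pos: "0 < d" and d_less_1: "d < 1"
begin

lemma prob_tab_pos: "0 < prob_tab m d z"
  using d_pos d_less_1 by (simp add: prob_tab_def)

lemma prob_event_pos: "z \<in> tables m \<Longrightarrow> E z \<Longrightarrow> 0 < prob_event m d E"
  unfolding prob_event_def
  by (rule sum_pos2[of _ z]) (auto simp: finite_tables prob_tab_pos less_imp_le)

lemma prob_event_mono:
  "(\<And>z. z \<in> tables m \<Longrightarrow> E z \<Longrightarrow> E' z) \<Longrightarrow> prob_event m d E \<le> prob_event m d E'"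
  unfolding prob_event_def
  by (rule sum_mono2) (auto simp: finite_tables prob_tab_pos less_imp_le)

lemma sum_prob_tab: "(\<Sum>z\<in>tables m. prob_tab m d z) = 1"
  by (simp add: sum_tables_Pow prob_tab_indicator sum_Pow_bernoulli finite_cube)

lemma cond_entropy_eq_sum_tables:
  "cond_entropy m d A B = (\<Sum>z\<in>tables m. prob_tab m d z *
      log 2 (prob_event m d (\<lambda>z'. B z' = B z) / prob_event m d (\<lambda>z'. (A z', B z') = (A z, B z))))"
proof -
  let ?X = "\<lambda>z. (A z, B z)"
  let ?g = "\<lambda>ab. log 2 (prob_event m d (\<lambda>z. B z = snd ab)
                       / prob_event m d (\<lambda>z. A z = fst ab \<and> B z = snd ab))"
  have "(\<Sum>z\<in>tables m. prob_tab m d z * ?g (?X z))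
      = (\<Sum>y\<in>?X ` tables m. \<Sum>z\<in>{z \<in> tables m. ?X z = y}. prob_tab m d z * ?g (?X z))"
    by (rule sum.image_gen[OF finite_tables])
  also have "\<dots> = (\<Sum>y\<in>?X ` tables m. \<Sum>z\<in>{z \<in> tables m. ?X z = y}. prob_tab m d z * ?g y)"
    by (intro sum.cong refl) auto
  also have "\<dots> = (\<Sum>y\<in>?X ` tables m. prob_event m d (\<lambda>z. A z = fst y \<and> B z = snd y) * ?g y)"
    unfolding prob_event_def sum_distrib_right[symmetric]
    by (intro sum.cong refl arg_cong2[where f="(*)"] arg_cong2[where f=sum]) auto
  finally show ?thesis
    unfolding cond_entropy_def Let_def by simp
qed

lemma cond_entropy_chain_rule:
  "cond_entropy m d A B = entropy m d (\<lambda>z. (A z, B z)) - entropy m d B"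
  unfolding cond_entropy_eq_sum_tables entropy_def sum_subtractf[symmetric]
proof (intro sum.cong refl)
  fix z assume z: "z \<in> tables m"
  have "0 < prob_event m d (\<lambda>z'. B z' = B z)"
    "0 < prob_event m d (\<lambda>z'. (A z', B z') = (A z, B z))"
    by (rule prob_event_pos[OF z], simp)+
  then show "prob_tab m d z *
      log 2 (prob_event m d (\<lambda>z'. B z' = B z) / prob_event m d (\<lambda>z'. (A z', B z') = (A z, B z)))
    = prob_tab m d z * - log 2 (prob_event m d (\<lambda>z'. (A z', B z') = (A z, B z))) -
      prob_tab m d z * - log 2 (prob_event m d (\<lambda>z'. B z' = B z))"
    by (simp add: log_divide_pos algebra_simps)
qed

lemma cond_entropy_nonneg: "0 \<le> cond_entropy m d A B"
  unfolding cond_entropy_eq_sum_tables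
proof (rule sum_nonneg)
  fix z assume z: "z \<in> tables m"
  let ?pab = "prob_event m d (\<lambda>z'. (A z', B z') = (A z, B z))"
  let ?pb = "prob_event m d (\<lambda>z'. B z' = B z)"
  have "0 < ?pab" by (rule prob_event_pos[OF z]) simp
  moreover have "?pab \<le> ?pb" by (rule prob_event_mono) simp
  ultimately have "0 \<le> log 2 (?pb / ?pab)" by simp
  then show "0 \<le> prob_tab m d z * log 2 (?pb / ?pab)"
    using prob_tab_pos by (simp add: less_imp_le)
qed

lemma entropy_cong:
  assumes "\<And>z z'. z \<in> tables m \<Longrightarrow> z' \<in> tables m \<Longrightarrow> X z' = X z \<longleftrightarrow> Y z' = Y z"
  shows "entropy m d X = entropy m d Y"
  unfolding entropy_def prob_event_def
  by (intro sum.cong refl arg_cong2[where f="(*)"] arg_cong[where f="\<lambda>x. - log 2 x"]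
        arg_cong2[where f=sum]) (use assms in auto)

lemma entropy_const: "entropy m d (\<lambda>z. c) = 0"
  by (simp add: entropy_def prob_event_def sum_prob_tab)

lemma entropy_id: "entropy m d (\<lambda>z. z) = 2 ^ m * bin_entropy d"
proof -
  let ?C = "cube m"
  let ?q = "\<lambda>A. d ^ card A * (1 - d) ^ card (?C - A)"
  have "entropy m d (\<lambda>z. z) = (\<Sum>z\<in>tables m. prob_tab m d z * - log 2 (prob_tab m d z))"
    unfolding entropy_def prob_event_def
    by (intro sum.cong refl) (simp add: Collect_conj_eq Int_absorb2 Int_commute[of "tables m"])
  also have "\<dots> = (\<Sum>A\<in>Pow ?C. ?q A * - log 2 (?q A))"
    by (simp add: sum_tables_Pow prob_tab_indicator)
  also have "\<dots> = (\<Sum>A\<in>Pow ?C. - log 2 d * (real (card A) * ?q A)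
                     + - log 2 (1 - d) * (real (card ?C) * ?q A - real (card A) * ?q A))"
  proof (intro sum.cong refl)
    fix A assume "A \<in> Pow ?C"
    then have "real (card ?C) = real (card A) + real (card (?C - A))"
      using finite_cube card_Diff_subset[of A ?C] card_mono[of ?C A] by (auto simp: finite_subset)
    then show "?q A * - log 2 (?q A) = - log 2 d * (real (card A) * ?q A)
                 + - log 2 (1 - d) * (real (card ?C) * ?q A - real (card A) * ?q A)"
      using d_pos d_less_1 by (simp add: log_mult_pos log_nat_power algebra_simps)
  qed
  also have "\<dots> = - log 2 d * (\<Sum>A\<in>Pow ?C. real (card A) * ?q A)
      + - log 2 (1 - d) * (real (card ?C) * (\<Sum>A\<in>Pow ?C. ?q A) - (\<Sum>A\<in>Pow ?C. real (card A) * ?q A))"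
    by (simp only: sum.distrib sum_subtractf sum_distrib_left[symmetric])
  also have "\<dots> = 2 ^ m * bin_entropy d"
    by (simp add: sum_Pow_bernoulli sum_Pow_card_bernoulli finite_cube card_Pow cube_def
        bin_entropy_def algebra_simps)
  finally show ?thesis .
qed

lemma f_ent_chain_rule:
  "f_ent m d r = entropy m d (\<lambda>z. (W_eq m r z, W_gt m r z)) - entropy m d (W_gt m r)"
  unfolding f_ent_def by (rule cond_entropy_chain_rule)

lemma entropy_W_eq_W_gt_0: "entropy m d (\<lambda>z. (W_eq m 0 z, W_gt m 0 z)) = entropy m d (\<lambda>z. z)"
proof (rule entropy_cong)
  fix z z' assume z: "z \<in> tables m" and z': "z' \<in> tables m"
  show "(W_eq m 0 z', W_gt m 0 z') = (W_eq m 0 z, W_gt m 0 z) \<longleftrightarrow> z' = z"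
  proof
    assume "(W_eq m 0 z', W_gt m 0 z') = (W_eq m 0 z, W_gt m 0 z)"
    then have "coeffs m z' = coeffs m z"
      by (simp add: coeffs_eq_W_eq_0_or_W_gt_0[OF z] coeffs_eq_W_eq_0_or_W_gt_0[OF z'])
    then show "z' = z"
      using inj_onD[OF coeffs_inj_on_tables] z z' by blast
  qed simp
qed

lemma entropy_W_eq_W_gt_Suc:
  "entropy m d (\<lambda>z. (W_eq m (Suc r) z, W_gt m (Suc r) z)) = entropy m d (W_gt m r)"
proof (rule entropy_cong)
  fix z z' :: "nat set \<Rightarrow> bool"
  show "(W_eq m (Suc r) z', W_gt m (Suc r) z') = (W_eq m (Suc r) z, W_gt m (Suc r) z)
    \<longleftrightarrow> W_gt m r z' = W_gt m r z"
  proof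
    assume "(W_eq m (Suc r) z', W_gt m (Suc r) z') = (W_eq m (Suc r) z, W_gt m (Suc r) z)"
    then show "W_gt m r z' = W_gt m r z"
      by (subst (1 2) W_gt_eq_W_eq_Suc_or_W_gt_Suc) simp
  qed (simp add: W_eq_Suc_eq W_gt_Suc_eq)
qed

lemma sum_f_ent_telescope:
  "(\<Sum>r\<le>k. f_ent m d r) = entropy m d (\<lambda>z. z) - entropy m d (W_gt m k)"
  by (induction k) (simp_all add: f_ent_chain_rule entropy_W_eq_W_gt_0 entropy_W_eq_W_gt_Suc)

lemma sum_f_ent: "(\<Sum>r\<le>m. f_ent m d r) = 2 ^ m * bin_entropy d"
  using sum_f_ent_telescope[of m]
  by (simp add: W_gt_top entropy_const entropy_id)

end

lemma f_ent_nonneg: "0 < d \<Longrightarrow> d < 1 \<Longrightarrow> 0 \<le> f_ent m d r"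
  unfolding f_ent_def by (rule cond_entropy_nonneg)

lemma f_ent_ge_above_r_thr:
  assumes "r \<le> m" "r_thr m d \<epsilon> < int r"
  shows "(1 - \<epsilon>) * real (m choose r) \<le> f_ent m d r"
proof -
  let ?R = "{r. r \<le> m \<and> f_avg m d r < 1 - \<epsilon>}"
  have "finite ?R" by (rule finite_subset[of _ "{..m}"]) auto
  then have "r \<notin> ?R"
    using assms(2) Max_ge[of ?R r] by (auto simp: r_thr_def split: if_splits)
  then have "1 - \<epsilon> \<le> f_ent m d r / real (m choose r)"
    using assms(1) by (simp add: f_avg_def)
  then show ?thesis
    using assms(1) by (simp add: pos_le_divide_eq)
qed

lemma r_thr_le: "r_thr m d \<epsilon> \<le> int m"
proof -
  let ?R = "{r. r \<le> m \<and> f_avg m d r < 1 - \<epsilon>}"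
  have "finite ?R" by (rule finite_subset[of _ "{..m}"]) auto
  then show ?thesis
    using Max_in[of ?R] by (auto simp: r_thr_def)
qed

lemma binom_le_eq_sum_lessThan: "binom_le m k = (\<Sum>r<nat (k + 1). m choose r)"
proof -
  have "{0..k} = int ` {..<nat (k + 1)}"
    by (auto simp: image_iff intro!: bexI[of _ "nat _"])
  then show ?thesis
    by (simp add: binom_le_def sum.reindex)
qed

lemma sum_above_threshold_le:
  fixes f b :: "nat \<Rightarrow> real"
  assumes "k \<le> Suc m" "\<And>r. r \<le> m \<Longrightarrow> 0 \<le> f r" "\<And>r. k \<le> r \<Longrightarrow> r \<le> m \<Longrightarrow> c * b r \<le> f r"
  shows "c * ((\<Sum>r\<le>m. b r) - (\<Sum>r<k. b r)) \<le> (\<Sum>r\<le>m. f r)"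
proof -
  have split: "(\<Sum>r\<le>m. g r) = (\<Sum>r<k. g r) + (\<Sum>r\<in>{k..m}. g r)" for g :: "nat \<Rightarrow> real"
    using sum.atLeastLessThan_concat[of 0 k "Suc m" g] assms(1)
    by (simp add: atLeast0LessThan atLeast0AtMost atLeastLessThanSuc_atLeastAtMost)
  have "c * ((\<Sum>r\<le>m. b r) - (\<Sum>r<k. b r)) = (\<Sum>r\<in>{k..m}. c * b r)"
    by (simp add: split[of b] sum_distrib_left)
  also have "\<dots> \<le> (\<Sum>r\<in>{k..m}. f r)"
    by (rule sum_mono) (use assms(3) in auto)
  also have "\<dots> \<le> (\<Sum>r\<le>m. f r)"
    unfolding split[of f] using assms(1,2) by (auto intro!: sum_nonneg)
  finally show ?thesis .
qed

theorem claim7p1: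
  fixes m :: nat and \<delta> \<epsilon> :: real
  assumes "m \<ge> 1" and "0 < \<delta>" and "\<delta> < 1/2" and "0 < \<epsilon>" and "\<epsilon> < 1"
  shows "real (binom_le m (r_thr m \<delta> \<epsilon>)) / 2 ^ m \<ge> 1 - bin_entropy \<delta> / (1 - \<epsilon>)"
proof -
  have \<delta>_less_1: "\<delta> < 1" using assms(3) by simp
  define k where "k = nat (r_thr m \<delta> \<epsilon> + 1)"
  have "(1 - \<epsilon>) * ((\<Sum>r\<le>m. real (m choose r)) - (\<Sum>r<k. real (m choose r)))
      \<le> (\<Sum>r\<le>m. f_ent m \<delta> r)"
  proof (rule sum_above_threshold_le)
    show "k \<le> Suc m" using r_thr_le[of m \<delta> \<epsilon>] by (simp add: k_def nat_le_iff)
    show "0 \<le> f_ent m \<delta> r" for r using f_ent_nonneg assms(2) \<delta>_less_1 .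
    show "(1 - \<epsilon>) * real (m choose r) \<le> f_ent m \<delta> r" if "k \<le> r" "r \<le> m" for r
      using that by (intro f_ent_ge_above_r_thr) (auto simp: k_def)
  qed
  then have "(1 - \<epsilon>) * (2 ^ m - real (binom_le m (r_thr m \<delta> \<epsilon>))) \<le> 2 ^ m * bin_entropy \<delta>"
    by (simp add: sum_f_ent[OF assms(2) \<delta>_less_1] binom_le_eq_sum_lessThan k_def
        choose_row_sum flip: of_nat_sum)
  then show ?thesis
    using assms(5) by (simp add: field_simps)
qed

end
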